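(* Let $n \geq 2$ be an integer and let $t$ be an integer with $3 \leq t \leq n+1$. Let $\mathbf{v} \in \mathbb{Z}^t$ be a vector whose first entry $\mathbf{v}(1)$ is nonzero. Then the set $T(n,t,\mathbf{v})$ is finite.
   Context: A nonzero polynomial in $\mathbb{R}[x]$ is real-rooted if all its complex roots are real. For $\mathbf{v}\in\mathbb{Z}^t$ with entries $\mathbf{v}(1),\dots,\mathbf{v}(t)$, $T(n,t,\mathbf{v})$ denotes the set of all real-rooted polynomials $p(x) = \sum_{i=0}^n a_i x^{n-i} \in \mathbb{Z}[x]$ of degree $n$ such that $a_{i-1} = \mathbf{v}(i)$ for all $i \in \{1,\dots,t\}$. *)

theory Defs
  imports "HOL-Computational_Algebra.Polynomial" Complex_Main
begin

definition real_rooted :: "real poly \<Rightarrow> bool" where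
  "real_rooted p \<longleftrightarrow> p \<noteq> 0 \<and>
     (\<forall>z::complex. poly (map_poly complex_of_real p) z = 0 \<longrightarrow> z \<in> \<real>)"

text \<open>T(n,t,v): integer real-rooted polynomials p = sum_{i=0}^n a_i x^(n-i) of degree n
  with a_(i-1) = v(i) for i in 1..t. Here a_i = coeff p (n - i).\<close>
definition T :: "nat \<Rightarrow> nat \<Rightarrow> (nat \<Rightarrow> int) \<Rightarrow> int poly set" where
  "T n t v = {p :: int poly. degree p = n \<and> real_rooted (map_poly real_of_int p) \<and>
     (\<forall>i\<in>{1..t}. coeff p (n - (i - 1)) = v i)}"

end

theory Submission
  imports Defs "HOL-Computational_Algebra.Fundamental_Theorem_Algebra"
begin

(* Over the complex numbers p = a\<^sub>0 (x - r\<^sub>1) \<cdots> (x - r\<^sub>n), with all r\<^sub>i real.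
   By Vieta, r\<^sub>1\<^sup>2 + \<dots> + r\<^sub>n\<^sup>2 = (a\<^sub>1/a\<^sub>0)\<^sup>2 - 2 a\<^sub>2/a\<^sub>0 =: S depends only on v, and since
   the roots are real this bounds every |r\<^sub>i| by sqrt S. Hence all coefficients of p are
   bounded by |a\<^sub>0| (1 + sqrt S)\<^sup>n, and there are only finitely many integer polynomials
   of degree n with bounded coefficients. *)

lemma coeff_prod_mset_linear_above:
  fixes A :: "'a::comm_ring_1 multiset"
  shows "size A < k \<Longrightarrow> coeff (\<Prod>x\<in>#A. [:-x, 1:]) k = 0"
  by (induction A arbitrary: k) (auto simp: coeff_pCons split: nat.split)

lemma coeff_prod_mset_linear_size:
  fixes A :: "'a::comm_ring_1 multiset"
  shows "coeff (\<Prod>x\<in>#A. [:-x, 1:]) (size A) = 1"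
  by (induction A) (simp_all add: coeff_prod_mset_linear_above)

lemma coeff_prod_mset_linear_subleading:
  fixes A :: "'a::comm_ring_1 multiset"
  shows "size A = Suc m \<Longrightarrow> coeff (\<Prod>x\<in>#A. [:-x, 1:]) m = - sum_mset A"
proof (induction A arbitrary: m)
  case (add a A)
  then show ?case
    using coeff_prod_mset_linear_size[of A] by (cases m) auto
qed simp

lemma coeff_prod_mset_linear_subsubleading:
  fixes A :: "'a::comm_ring_1 multiset"
  shows "size A = Suc (Suc m) \<Longrightarrow>
    2 * coeff (\<Prod>x\<in>#A. [:-x, 1:]) m = (sum_mset A)^2 - (\<Sum>x\<in>#A. x^2)"
proof (induction A arbitrary: m)
  case (add a A)
  have sub: "coeff (\<Prod>x\<in>#A. [:-x, 1:]) m = - sum_mset A"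
    using add.prems by (intro coeff_prod_mset_linear_subleading) simp
  show ?case
  proof (cases m)
    case 0
    then obtain b where "A = {#b#}"
      using add.prems size_1_singleton_mset[of A] by auto
    then show ?thesis using 0 by (simp add: power2_eq_square algebra_simps)
  next
    case (Suc m')
    then show ?thesis using add sub by (simp add: power2_eq_square algebra_simps)
  qed
qed simp

lemma coeff_linear_factor_mult:
  fixes a :: "'a::comm_ring_1"
  shows "coeff ([:-a, 1:] * p) k = coeff (pCons 0 p) k - a * coeff p k"
  by (simp add: algebra_simps)

lemma norm_coeff_prod_mset_linear_le:
  fixes A :: "'a::{comm_ring_1, real_normed_algebra_1} multiset"
  assumes "\<And>x. x \<in># A \<Longrightarrow> norm x \<le> B"
  shows "norm (coeff (\<Prod>x\<in>#A. [:-x, 1:]) k) \<le> (1 + B) ^ size A"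
  using assms
proof (induction A arbitrary: k)
  case empty
  then show ?case by (cases k) auto
next
  case (add a A)
  let ?P = "\<Prod>x\<in>#A. [:-x, 1:]"
  have IH: "norm (coeff ?P j) \<le> (1 + B) ^ size A" for j
    using add by simp
  have "norm a \<le> B" using add.prems by simp
  then have "B \<ge> 0" using norm_ge_zero order_trans by blast
  have "norm (coeff (pCons 0 ?P) k) \<le> (1 + B) ^ size A"
    using IH \<open>B \<ge> 0\<close> by (cases k) auto
  moreover have "norm (a * coeff ?P k) \<le> B * (1 + B) ^ size A"
    using norm_mult_ineq[of a] mult_mono[OF \<open>norm a \<le> B\<close> IH[of k]] \<open>B \<ge> 0\<close>
    by (meson norm_ge_zero order_trans)
  ultimately have "norm (coeff ([:-a, 1:] * ?P) k) \<le> (1 + B) ^ size A + B * (1 + B) ^ size A"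
    unfolding coeff_linear_factor_mult by (meson add_mono norm_triangle_ineq4 order_trans)
  then show ?case by (simp add: algebra_simps)
qed

lemma member_le_sum_mset:
  fixes f :: "'a \<Rightarrow> 'b::ordered_comm_monoid_add"
  assumes "x \<in># A" and "\<And>y. y \<in># A \<Longrightarrow> 0 \<le> f y"
  shows "f x \<le> (\<Sum>y\<in>#A. f y)"
proof -
  have "0 \<le> (\<Sum>y\<in>#A - {#x#}. f y)"
    using assms(2) sum_mset_mono[of "A - {#x#}" "\<lambda>_. 0" f] by (auto dest: in_diffD)
  moreover have "(\<Sum>y\<in>#A. f y) = f x + (\<Sum>y\<in>#A - {#x#}. f y)"
    using assms(1) by (metis insert_DiffM image_mset_add_mset sum_mset.add_mset)
  ultimately show ?thesis by (simp add: add_increasing2)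
qed

lemma sum_mset_power2_real_complex:
  assumes "\<And>z. z \<in># A \<Longrightarrow> z \<in> \<real>"
  shows "(\<Sum>z\<in>#A. z^2) = complex_of_real (\<Sum>z\<in>#A. (norm z)^2)"
  using assms
proof (induction A)
  case (add a A)
  then obtain r where "a = of_real r" by (auto elim: Reals_cases)
  then show ?case using add by simp
qed simp

lemma real_rooted_factorization:
  fixes p :: "real poly"
  assumes "real_rooted p"
  obtains R :: "complex multiset"
  where "size R = degree p" and "\<And>z. z \<in># R \<Longrightarrow> z \<in> \<real>"
    and "\<And>k. coeff (\<Prod>z\<in>#R. [:-z, 1:]) k = of_real (coeff p k / lead_coeff p)"
proof
  define pc where "pc = map_poly complex_of_real p"
  let ?P = "\<Prod>z\<in>#proots pc. [:-z, 1:]"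
  have "p \<noteq> 0"
    using assms by (simp add: real_rooted_def)
  then have "lead_coeff p \<noteq> 0" and "pc \<noteq> 0"
    by (auto simp: pc_def map_poly_eq_0_iff)
  have deg_pc: "degree pc = degree p"
    by (simp add: pc_def degree_map_poly)
  then show "size (proots pc) = degree p"
    by (simp add: size_proots_complex)
  show "z \<in> \<real>" if "z \<in># proots pc" for z
    using assms that set_count_proots[OF \<open>pc \<noteq> 0\<close>]
    unfolding real_rooted_def pc_def by auto
  have decomp: "pc = smult (lead_coeff pc) ?P"
    by (rule complex_poly_decompose_multiset [symmetric])
  have coeff_pc: "coeff pc k = of_real (coeff p k)" for k
    by (simp add: pc_def coeff_map_poly)
  have coeff_p: "of_real (coeff p k) = of_real (lead_coeff p) * coeff ?P k" for k
    using arg_cong[OF decomp, of "\<lambda>q. coeff q k"] by (simp add: coeff_pc deg_pc)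
  show "coeff ?P k = of_real (coeff p k / lead_coeff p)" for k
    using coeff_p[of k] \<open>lead_coeff p \<noteq> 0\<close> by (simp add: field_simps)
qed

lemma real_rooted_coeff_bound:
  fixes p :: "real poly"
  assumes "real_rooted p" and "degree p \<ge> 2"
  defines "S \<equiv> (coeff p (degree p - 1) / lead_coeff p)^2 - 2 * (coeff p (degree p - 2) / lead_coeff p)"
  shows "\<bar>coeff p k\<bar> \<le> \<bar>lead_coeff p\<bar> * (1 + sqrt S) ^ degree p"
proof -
  define n where "n = degree p"
  obtain R :: "complex multiset" where "size R = n" and real_roots: "\<And>z. z \<in># R \<Longrightarrow> z \<in> \<real>"
    and coeff_P: "\<And>k. coeff (\<Prod>z\<in>#R. [:-z, 1:]) k = of_real (coeff p k / lead_coeff p)"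
    using real_rooted_factorization[OF assms(1)] unfolding n_def by blast
  have "sum_mset R = - of_real (coeff p (n - 1) / lead_coeff p)"
    using coeff_prod_mset_linear_subleading[of R "n - 1"] coeff_P \<open>size R = n\<close> assms(2)
    by (simp add: n_def)
  moreover have "2 * of_real (coeff p (n - 2) / lead_coeff p) = (sum_mset R)^2 - (\<Sum>z\<in>#R. z^2)"
    using coeff_prod_mset_linear_subsubleading[of R "n - 2"] coeff_P \<open>size R = n\<close> assms(2)
    by (simp add: n_def numeral_2_eq_2 Suc_diff_Suc)
  ultimately have "(\<Sum>z\<in>#R. z^2) = of_real S"
    by (simp add: S_def n_def power2_eq_square algebra_simps)
  then have sum_norm2: "(\<Sum>z\<in>#R. (norm z)^2) = S"
    using sum_mset_power2_real_complex[OF real_roots] of_real_eq_iff by metis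
  have "norm z \<le> sqrt S" if "z \<in># R" for z
    using member_le_sum_mset[OF that, of "\<lambda>z. (norm z)^2"] sum_norm2 by (simp add: real_le_rsqrt)
  then have "norm (coeff (\<Prod>z\<in>#R. [:-z, 1:]) k) \<le> (1 + sqrt S) ^ n"
    using norm_coeff_prod_mset_linear_le \<open>size R = n\<close> by metis
  moreover have "lead_coeff p \<noteq> 0"
    using assms(1) by (simp add: real_rooted_def)
  ultimately show ?thesis
    by (simp add: coeff_P n_def norm_divide divide_le_eq mult.commute)
qed

lemma finite_int_polys_bounded:
  "finite {p :: int poly. degree p \<le> n \<and> (\<forall>k. \<bar>coeff p k\<bar> \<le> N)}"
proof (rule finite_subset)
  show "finite (Poly ` {xs. set xs \<subseteq> {-N..N} \<and> length xs \<le> Suc n})"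
    by (intro finite_imageI finite_lists_length_le) auto
  show "{p. degree p \<le> n \<and> (\<forall>k. \<bar>coeff p k\<bar> \<le> N)}
        \<subseteq> Poly ` {xs. set xs \<subseteq> {-N..N} \<and> length xs \<le> Suc n}"
  proof clarify
    fix p :: "int poly"
    assume deg: "degree p \<le> n" and bound: "\<forall>k. \<bar>coeff p k\<bar> \<le> N"
    have "set (coeffs p) \<subseteq> {-N..N}"
    proof
      fix c assume "c \<in> set (coeffs p)"
      then obtain k where "c = coeff p k"
        using range_coeff[of p] by blast
      then show "c \<in> {-N..N}"
        using bound[rule_format, of k] by auto
    qed
    moreover have "length (coeffs p) \<le> Suc n"
      using deg by (cases "p = 0") (auto simp: length_coeffs_degree)
    ultimately show "p \<in> Poly ` {xs. set xs \<subseteq> {-N..N} \<and> length xs \<le> Suc n}"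
      by (intro image_eqI[of _ _ "coeffs p"]) auto
  qed
qed

theorem proposition2p9:
  fixes n t :: nat and v :: "nat \<Rightarrow> int"
  assumes "n \<ge> 2" and "3 \<le> t" and "t \<le> n + 1" and "v 1 \<noteq> 0"
  shows "finite (T n t v)"
proof -
  define N where
    "N = \<lfloor>\<bar>v 1\<bar> * (1 + sqrt ((v 2 / v 1)^2 - 2 * (v 3 / v 1))) ^ n\<rfloor>"
  have "T n t v \<subseteq> {p. degree p \<le> n \<and> (\<forall>k. \<bar>coeff p k\<bar> \<le> N)}"
  proof
    fix p assume "p \<in> T n t v"
    then have deg: "degree p = n" and rr: "real_rooted (map_poly real_of_int p)"
      and prefix: "\<forall>i\<in>{1..t}. coeff p (n - (i - 1)) = v i"
      by (simp_all add: T_def)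
    have "coeff p n = v 1" "coeff p (n - 1) = v 2" "coeff p (n - 2) = v 3"
      using bspec[OF prefix, of 1] bspec[OF prefix, of 2] bspec[OF prefix, of 3] \<open>3 \<le> t\<close>
      by simp_all
    moreover have "degree (map_poly real_of_int p) = n"
      using deg by (simp add: degree_map_poly)
    ultimately have "\<bar>coeff p k\<bar> \<le> \<bar>v 1\<bar> * (1 + sqrt ((v 2 / v 1)^2 - 2 * (v 3 / v 1))) ^ n" for k
      using real_rooted_coeff_bound[OF rr, of k] \<open>n \<ge> 2\<close> by (simp add: coeff_map_poly)
    then show "p \<in> {p. degree p \<le> n \<and> (\<forall>k. \<bar>coeff p k\<bar> \<le> N)}"
      using deg by (simp add: N_def le_floor_iff)
  qed
  then show ?thesis
    using finite_int_polys_bounded finite_subset by blast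
qed

end
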